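(* Let $0\le r\le R$ be integers, assume $\mu<\infty$, $\mu p\neq 1$ and $\mu p q\neq 1$, and consider the model on the truncated tree $\mathbb{T}_R$ with the information starting at the vertex $x$ at distance $r$ from the root. Then $$ E_r (S) = \frac{1}{1 - \mu p} \bigg(1 + q \,\frac{1 - q^r}{1 - q} \, (1 - p) - (\mu p)^{R - r + 1} \,\frac{1 - pq (1 + (\mu - 1)(\mu pq)^r)}{1 - \mu pq} \bigg). $$
   Context: Let $(p_k)_{k\ge 0}$ be an offspring distribution with $p_0=0$, mean $\mu=\sum_k kp_k$ and variance $\sigma^2=\sum_k (k-\mu)^2p_k$. Let $\mathbb{T}$ be a Galton–Watson tree with root $0$ and offspring distribution $(p_k)$ (each vertex independently has $k$ offspring, i.e. edges going away from the root, with probability $p_k$). For an integer $R\ge 0$, the truncated tree $\mathbb{T}_R$ is the subgraph of $\mathbb{T}$ induced by the vertices at distance at most $R$ from the root. Fix $p,q\in(0,1)$. Each edge of the tree is replaced by two arrows: the arrow parent $\to$ offspring is open with probability $p$ and the arrow offspring $\to$ parent is open with probability $q$, all arrows independently of each other and of the tree. The source of the information is a vertex $x$ at distance $r$ from the root chosen independently of the offspring numbers of its ancestors and of the percolation (e.g. the vertex obtained from the root by always moving to the first offspring); let $0=x_0\to x_1\to\cdots\to x_r=x$ be the path from the root to $x$. The cluster is $\mathscr{C}=\{y: \text{there is a directed open path from } x \text{ to } y\}$ (including $x$), its elements are called wet, and $S=\operatorname{card}(\mathscr{C})$. $E_r$ and $P_r$ denote expectation and probability (over both the tree and the percolation) when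 the source is at distance $r$ from the root. *)

theory Defs
  imports "HOL-Probability.Probability"
begin

text \<open>Vertices of the (potential) Galton--Watson tree are Ulam--Harris labels (nat lists).
  A configuration assigns to every label v a triple (number of offspring of v,
  arrow parent(v) to v open, arrow v to parent(v) open).\<close>

type_synonym config = "nat list \<Rightarrow> nat \<times> bool \<times> bool"

definition offspring_mean :: "nat pmf \<Rightarrow> real" where
  "offspring_mean P = measure_pmf.expectation P real"

definition GW_perc :: "nat pmf \<Rightarrow> real \<Rightarrow> real \<Rightarrow> config measure" where
  "GW_perc P p q = PiM UNIV (\<lambda>_::nat list.
      measure_pmf (pair_pmf P (pair_pmf (bernoulli_pmf p) (bernoulli_pmf q))))"

definition is_vertex :: "config \<Rightarrow> nat \<Rightarrow> nat list \<Rightarrow> bool" where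
  "is_vertex \<omega> R v \<longleftrightarrow> length v \<le> R \<and> (\<forall>j < length v. v ! j < fst (\<omega> (take j v)))"

definition open_arrows :: "config \<Rightarrow> nat \<Rightarrow> (nat list \<times> nat list) set" where
  "open_arrows \<omega> R = {(u, w). is_vertex \<omega> R u \<and> is_vertex \<omega> R w \<and>
      ((\<exists>i. w = u @ [i] \<and> fst (snd (\<omega> w))) \<or> (\<exists>i. u = w @ [i] \<and> snd (snd (\<omega> u))))}"

definition wet_cluster :: "config \<Rightarrow> nat \<Rightarrow> nat list \<Rightarrow> nat list set" where
  "wet_cluster \<omega> R x = {y. (x, y) \<in> (open_arrows \<omega> R)\<^sup>*}"

end

theory Submission
  imports Defs
begin

text \<open>Every vertex of the tree is written uniquely as \<open>spine k @ s\<close>, where \<open>spine k\<close> is the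
  ancestor of the source at depth \<open>k \<le> r\<close> at which the path from the source to the vertex
  turns downwards. The vertex is wet iff the \<open>r - k\<close> upward arrows along the spine and the
  \<open>length s\<close> downward arrows along \<open>s\<close> are open and \<open>s\<close> stays inside \<open>\<T>\<^sub>R\<close>; by
  independence this has probability \<open>q\<^sup>r\<^sup>-\<^sup>k\<close> times a product of factors \<open>p P(N > s\<^sub>j)\<close>.
  Summing over \<open>s\<close> turns each product into a power of \<open>\<mu> p\<close>, since \<open>\<Sum>\<^sub>i P(N > i) = \<mu>\<close>,
  except that the first step off the spine must avoid the spine itself, which replaces \<open>\<mu>\<close>
  by \<open>\<mu> - 1\<close> there. The resulting finite geometric sums evaluate to the stated formula.\<close>

section \<open>Nonnegative integrals over lists\<close>

lemma nn_integral_list_Nil_Cons: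
  fixes f :: "'a list \<Rightarrow> ennreal"
  shows "(\<integral>\<^sup>+ s. f s \<partial>count_space UNIV)
    = f [] + (\<integral>\<^sup>+ i. \<integral>\<^sup>+ s. f (i # s) \<partial>count_space UNIV \<partial>count_space UNIV)"
proof -
  have bij: "bij_betw (\<lambda>(i, s). i # s) (UNIV :: ('a \<times> 'a list) set) (- {[]})"
    by (auto simp: bij_betw_def inj_on_def image_def neq_Nil_conv)
  have "(\<integral>\<^sup>+ s. f s \<partial>count_space UNIV)
      = (\<integral>\<^sup>+ s. f s * indicator {[]} s + f s * indicator (- {[]}) s \<partial>count_space UNIV)"
    by (intro nn_integral_cong) (auto split: split_indicator)
  also have "\<dots> = f [] + (\<integral>\<^sup>+ s. f s \<partial>count_space (- {[]}))"
    by (subst nn_integral_add) (auto simp: nn_integral_count_space_indicator)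
  also have "(\<integral>\<^sup>+ s. f s \<partial>count_space (- {[]})) = (\<integral>\<^sup>+ z. f ((\<lambda>(i, s). i # s) z) \<partial>count_space UNIV)"
    by (rule nn_integral_bij_count_space[OF bij, symmetric])
  also have "\<dots> = (\<integral>\<^sup>+ i. \<integral>\<^sup>+ s. f (i # s) \<partial>count_space UNIV \<partial>count_space UNIV)"
    by (subst nn_integral_fst_count_space[symmetric]) simp
  finally show ?thesis .
qed

lemma nn_integral_bounded_lists_prod:
  fixes a :: "'a \<Rightarrow> ennreal"
  shows "(\<integral>\<^sup>+ s. (if length s \<le> n then \<Prod>j<length s. a (s ! j) else 0) \<partial>count_space UNIV)
      = (\<Sum>m\<le>n. (\<integral>\<^sup>+ i. a i \<partial>count_space UNIV) ^ m)"
proof (induction n)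
  case 0
  then show ?case by (subst nn_integral_list_Nil_Cons) simp
next
  case (Suc n)
  let ?A = "\<integral>\<^sup>+ i. a i \<partial>count_space UNIV"
  have "(\<integral>\<^sup>+ s. (if length s \<le> Suc n then \<Prod>j<length s. a (s ! j) else 0) \<partial>count_space UNIV)
     = 1 + (\<integral>\<^sup>+ i. \<integral>\<^sup>+ s. a i * (if length s \<le> n then \<Prod>j<length s. a (s ! j) else 0)
             \<partial>count_space UNIV \<partial>count_space UNIV)"
    by (subst nn_integral_list_Nil_Cons)
      (auto intro!: nn_integral_cong simp: prod.lessThan_Suc_shift simp del: prod.lessThan_Suc)
  also have "\<dots> = 1 + ?A * (\<Sum>m\<le>n. ?A ^ m)"
    by (simp add: nn_integral_cmult nn_integral_multc Suc)
  also have "\<dots> = (\<Sum>m\<le>Suc n. ?A ^ m)"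
    by (simp add: sum_distrib_left sum.atMost_Suc_shift del: sum.atMost_Suc)
  finally show ?case .
qed

section \<open>Tail probabilities of the offspring distribution\<close>

definition tail_prob :: "nat pmf \<Rightarrow> nat \<Rightarrow> ennreal" where
  "tail_prob P i = emeasure (measure_pmf P) {n. i < n}"

lemma nn_integral_tail_prob:
  assumes "integrable (measure_pmf P) real"
  shows "(\<integral>\<^sup>+ i. tail_prob P i \<partial>count_space UNIV) = ennreal (offspring_mean P)"
proof -
  have "(\<integral>\<^sup>+ i. tail_prob P i \<partial>count_space UNIV) = (\<integral>\<^sup>+ n. ennreal_of_enat (enat n) \<partial>measure_pmf P)"
    by (subst nn_integral_enat_function) (simp_all add: nn_integral_count_space_nat tail_prob_def)
  also have "\<dots> = (\<integral>\<^sup>+ n. ennreal (real n) \<partial>measure_pmf P)"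
    by (simp add: ennreal_of_nat_eq_real_of_nat)
  also have "\<dots> = ennreal (offspring_mean P)"
    unfolding offspring_mean_def by (rule nn_integral_eq_integral[OF assms]) simp
  finally show ?thesis .
qed

lemma tail_prob_0: "pmf P 0 = 0 \<Longrightarrow> tail_prob P 0 = 1"
proof -
  assume "pmf P 0 = 0"
  moreover have "{n::nat. 0 < n} = UNIV - {0}" by auto
  ultimately show ?thesis
    by (simp add: tail_prob_def measure_pmf.emeasure_eq_measure measure_pmf.finite_measure_Diff
        measure_pmf_single)
qed

lemma nn_integral_tail_prob_split:
  assumes "pmf P 0 = 0"
  shows "(\<integral>\<^sup>+ i. tail_prob P i \<partial>count_space UNIV)
    = 1 + (\<integral>\<^sup>+ i. tail_prob P i * indicator {i. i \<noteq> 0} i \<partial>count_space UNIV)"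
proof -
  have "(\<integral>\<^sup>+ i. tail_prob P i \<partial>count_space UNIV)
      = (\<integral>\<^sup>+ i. tail_prob P i * indicator {0} i + tail_prob P i * indicator {i. i \<noteq> 0} i
          \<partial>count_space UNIV)"
    by (intro nn_integral_cong) (auto split: split_indicator)
  then show ?thesis
    by (subst (asm) nn_integral_add) (auto simp: tail_prob_0[OF assms])
qed

lemma offspring_mean_ge_1:
  assumes "pmf P 0 = 0" "integrable (measure_pmf P) real"
  shows "1 \<le> offspring_mean P"
proof -
  have "1 \<le> ennreal (offspring_mean P)"
    using nn_integral_tail_prob_split[OF assms(1)] nn_integral_tail_prob[OF assms(2)] by simp
  then show ?thesis
    by (cases "0 \<le> offspring_mean P") (auto simp: ennreal_neg simp flip: ennreal_1)
qed

lemma nn_integral_tail_prob_nonzero: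
  assumes "pmf P 0 = 0" "integrable (measure_pmf P) real"
  shows "(\<integral>\<^sup>+ i. tail_prob P i * indicator {i. i \<noteq> 0} i \<partial>count_space UNIV)
    = ennreal (offspring_mean P - 1)"
proof -
  have "ennreal (offspring_mean P - 1) = ennreal (offspring_mean P) - 1"
    using offspring_mean_ge_1[OF assms] by (metis ennreal_1 ennreal_minus zero_le_one)
  then show ?thesis
    using nn_integral_tail_prob_split[OF assms(1)] nn_integral_tail_prob[OF assms(2)]
    by (simp add: ennreal_add_diff_cancel_left)
qed

lemma nn_integral_bounded_lists_tail_prob:
  assumes "integrable (measure_pmf P) real" "0 \<le> p"
  shows "(\<integral>\<^sup>+ s. (if length s \<le> n then \<Prod>j<length s. ennreal p * tail_prob P (s ! j) else 0)
      \<partial>count_space UNIV) = ennreal (\<Sum>m\<le>n. (offspring_mean P * p) ^ m)"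
proof -
  have "0 \<le> offspring_mean P" unfolding offspring_mean_def by simp
  moreover have "(\<integral>\<^sup>+ i. ennreal p * tail_prob P i \<partial>count_space UNIV) = ennreal (offspring_mean P * p)"
    using nn_integral_tail_prob[OF assms(1)] assms(2)
    by (simp add: nn_integral_cmult ennreal_mult' mult.commute)
  ultimately show ?thesis
    using assms(2) nn_integral_bounded_lists_prod[of n "\<lambda>i. ennreal p * tail_prob P i"]
    by (simp add: ennreal_power)
qed

section \<open>Vertices of the truncated tree\<close>

abbreviation spine :: "nat \<Rightarrow> nat list" where
  "spine k \<equiv> replicate k 0"

lemma spine_Suc: "spine (Suc k) = spine k @ [0]"
  by (simp add: replicate_append_same)

lemma is_vertex_snoc:
  "is_vertex \<omega> R (v @ [i]) \<longleftrightarrow> is_vertex \<omega> R v \<and> length v < R \<and> i < fst (\<omega> v)"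
  by (auto simp: is_vertex_def nth_append less_Suc_eq)

lemma is_vertex_spine: "\<forall>v. 0 < fst (\<omega> v) \<Longrightarrow> k \<le> R \<Longrightarrow> is_vertex \<omega> R (spine k)"
  by (simp add: is_vertex_def)

lemma down_arrow_open:
  "is_vertex \<omega> R (u @ [i]) \<Longrightarrow> fst (snd (\<omega> (u @ [i]))) \<Longrightarrow> (u, u @ [i]) \<in> open_arrows \<omega> R"
  by (auto simp: open_arrows_def is_vertex_snoc)

lemma up_arrow_open:
  "is_vertex \<omega> R (u @ [i]) \<Longrightarrow> snd (snd (\<omega> (u @ [i]))) \<Longrightarrow> (u @ [i], u) \<in> open_arrows \<omega> R"
  by (auto simp: open_arrows_def is_vertex_snoc)

lemma open_arrowsE:
  assumes "(u, w) \<in> open_arrows \<omega> R"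
  obtains (down) i where "w = u @ [i]" "is_vertex \<omega> R w" "fst (snd (\<omega> w))"
    | (up) i where "u = w @ [i]" "snd (snd (\<omega> u))"
  using assms by (auto simp: open_arrows_def)

lemma finite_vertices: "finite {v. is_vertex \<omega> R v}"
proof (induction R)
  case 0
  have "{v. is_vertex \<omega> 0 v} \<subseteq> {[]}" by (auto simp: is_vertex_def)
  then show ?case using finite_subset by blast
next
  case (Suc R)
  let ?V = "{v. is_vertex \<omega> R v}"
  have "{v. is_vertex \<omega> (Suc R) v} \<subseteq> ?V \<union> (\<Union>u\<in>?V. (\<lambda>i. u @ [i]) ` {..<fst (\<omega> u)})"
  proof
    fix v assume v: "v \<in> {v. is_vertex \<omega> (Suc R) v}"
    show "v \<in> ?V \<union> (\<Union>u\<in>?V. (\<lambda>i. u @ [i]) ` {..<fst (\<omega> u)})"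
    proof (cases v rule: rev_cases)
      case (snoc u i)
      with v have "is_vertex \<omega> (Suc R) u" "length u < Suc R" "i < fst (\<omega> u)"
        by (auto simp: is_vertex_snoc)
      then have "is_vertex \<omega> R u" by (auto simp: is_vertex_def)
      with snoc \<open>i < fst (\<omega> u)\<close> show ?thesis by blast
    qed (simp add: is_vertex_def)
  qed
  then show ?case using Suc.IH by (auto intro: finite_subset)
qed

lemma finite_wet_cluster: "finite (wet_cluster \<omega> R x)"
proof -
  have "wet_cluster \<omega> R x \<subseteq> insert x {v. is_vertex \<omega> R v}"
  proof
    fix y assume "y \<in> wet_cluster \<omega> R x"
    then have "(x, y) \<in> (open_arrows \<omega> R)\<^sup>*" by (simp add: wet_cluster_def)
    then show "y \<in> insert x {v. is_vertex \<omega> R v}"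
      by (cases rule: rtrancl.cases) (auto simp: open_arrows_def)
  qed
  then show ?thesis using finite_vertices finite_subset by (metis finite_insert)
qed

section \<open>Decomposition of a vertex relative to the source\<close>

definition spine_decomp :: "nat \<Rightarrow> (nat \<times> nat list) set" where
  "spine_decomp r = {(k, s). k \<le> r \<and> (k < r \<longrightarrow> s = [] \<or> hd s \<noteq> 0)}"

lemma spine_decomp_exists: "\<exists>k s. (k, s) \<in> spine_decomp r \<and> y = spine k @ s"
proof (induction r arbitrary: y)
  case 0
  show ?case by (auto simp: spine_decomp_def)
next
  case (Suc r)
  show ?case
  proof (cases y)
    case Nil
    then show ?thesis by (intro exI[of _ 0] exI[of _ "[]"]) (simp add: spine_decomp_def)
  next
    case (Cons a y')
    show ?thesis
    proof (cases "a = 0")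
      case True
      obtain k s where "(k, s) \<in> spine_decomp r" "y' = spine k @ s" using Suc.IH by blast
      then show ?thesis using Cons True
        by (intro exI[of _ "Suc k"] exI[of _ s]) (auto simp: spine_decomp_def)
    next
      case False
      then show ?thesis using Cons
        by (intro exI[of _ 0] exI[of _ y]) (auto simp: spine_decomp_def)
    qed
  qed
qed

lemma spine_decomp_unique_aux:
  assumes "(k, s) \<in> spine_decomp r" "(k', s') \<in> spine_decomp r" "spine k @ s = spine k' @ s'"
  shows "k \<le> k'"
proof (rule ccontr)
  assume "\<not> k \<le> k'"
  then have "spine k = spine k' @ spine (k - k')"
    by (simp flip: replicate_add)
  then have "s' = spine (k - k') @ s" using assms(3) by simp
  then have "s' \<noteq> [] \<and> hd s' = 0" using \<open>\<not> k \<le> k'\<close> by simp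
  moreover have "k' < r" using assms(1) \<open>\<not> k \<le> k'\<close> by (simp add: spine_decomp_def)
  ultimately show False using assms(2) by (simp add: spine_decomp_def)
qed

lemma spine_decomp_unique:
  assumes "(k, s) \<in> spine_decomp r" "(k', s') \<in> spine_decomp r" "spine k @ s = spine k' @ s'"
  shows "k = k' \<and> s = s'"
proof -
  have "k = k'"
    using spine_decomp_unique_aux[OF assms] spine_decomp_unique_aux[OF assms(2,1) assms(3)[symmetric]]
    by (rule antisym)
  with assms(3) show ?thesis by simp
qed

lemma bij_betw_spine_decomp: "bij_betw (\<lambda>(k, s). spine k @ s) (spine_decomp r) UNIV"
proof (rule bij_betw_imageI)
  show "inj_on (\<lambda>(k, s). spine k @ s) (spine_decomp r)"
    by (auto intro: inj_onI dest: spine_decomp_unique)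
  show "(\<lambda>(k, s). spine k @ s) ` spine_decomp r = UNIV"
  proof safe
    fix y :: "nat list"
    obtain k s where "(k, s) \<in> spine_decomp r" "y = spine k @ s"
      using spine_decomp_exists by blast
    then show "y \<in> (\<lambda>(k, s). spine k @ s) ` spine_decomp r" by force
  qed auto
qed

section \<open>The wet cluster\<close>

definition wet_path :: "config \<Rightarrow> nat \<Rightarrow> nat \<Rightarrow> nat \<Rightarrow> nat list \<Rightarrow> bool" where
  "wet_path \<omega> r R k s \<longleftrightarrow> k + length s \<le> R
     \<and> (\<forall>j. k < j \<and> j \<le> r \<longrightarrow> snd (snd (\<omega> (spine j))))
     \<and> (\<forall>j<length s. s ! j < fst (\<omega> (spine k @ take j s)))
     \<and> (\<forall>j. 0 < j \<and> j \<le> length s \<longrightarrow> fst (snd (\<omega> (spine k @ take j s))))"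

lemma spine_ascent_open:
  assumes "\<forall>v. 0 < fst (\<omega> v)" "r \<le> R" "j \<le> r"
    and up: "\<forall>i. j < i \<and> i \<le> r \<longrightarrow> snd (snd (\<omega> (spine i)))"
  shows "(spine r, spine j) \<in> (open_arrows \<omega> R)\<^sup>*"
  using assms(3,4)
proof (induction "r - j" arbitrary: j)
  case 0
  then show ?case by simp
next
  case (Suc d)
  have "(spine r, spine (Suc j)) \<in> (open_arrows \<omega> R)\<^sup>*"
    using Suc.hyps Suc.prems by (intro Suc.hyps(1)[of "Suc j"]) auto
  moreover have "(spine (Suc j), spine j) \<in> open_arrows \<omega> R"
  proof -
    have "j < Suc j \<and> Suc j \<le> r" using Suc.hyps(2) by simp
    with Suc.prems(2) have up: "snd (snd (\<omega> (spine (Suc j))))" by blast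
    have v: "is_vertex \<omega> R (spine (Suc j))"
      using Suc.hyps(2) assms(2) by (intro is_vertex_spine[OF assms(1)]) simp
    from up_arrow_open[OF v[unfolded spine_Suc] up[unfolded spine_Suc]] show ?thesis
      unfolding spine_Suc .
  qed
  ultimately show ?case by (rule rtrancl_into_rtrancl)
qed

lemma descent_open:
  assumes u: "is_vertex \<omega> R u" and len: "length u + length s \<le> R"
    and child: "\<forall>j<length s. s ! j < fst (\<omega> (u @ take j s))"
    and down: "\<forall>j. 0 < j \<and> j \<le> length s \<longrightarrow> fst (snd (\<omega> (u @ take j s)))"
  shows "(u, u @ s) \<in> (open_arrows \<omega> R)\<^sup>*"
proof -
  have snoc: "u @ take (Suc j) s = (u @ take j s) @ [s ! j]" if "j < length s" for j
    using that by (simp add: take_Suc_conv_app_nth)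
  have vertex: "is_vertex \<omega> R (u @ take j s)" if "j \<le> length s" for j
    using that
  proof (induction j)
    case (Suc j)
    then have "is_vertex \<omega> R ((u @ take j s) @ [s ! j])"
      using child len by (subst is_vertex_snoc) simp
    then show ?case using snoc[of j] Suc.prems by simp
  qed (simp add: u)
  have "(u, u @ take j s) \<in> (open_arrows \<omega> R)\<^sup>*" if "j \<le> length s" for j
    using that
  proof (induction j)
    case (Suc j)
    have "(u @ take j s, u @ take (Suc j) s) \<in> open_arrows \<omega> R"
      unfolding snoc[OF Suc_le_lessD[OF Suc.prems]]
      using Suc.prems vertex[of "Suc j"] down snoc[of j] by (intro down_arrow_open) auto
    with Suc show ?case by (meson Suc_leD rtrancl_into_rtrancl)
  qed simp
  from this[of "length s"] show ?thesis by simp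
qed

lemma wet_path_imp_wet:
  assumes "\<forall>v. 0 < fst (\<omega> v)" "r \<le> R" "k \<le> r" "wet_path \<omega> r R k s"
  shows "spine k @ s \<in> wet_cluster \<omega> R (spine r)"
proof -
  have "(spine r, spine k) \<in> (open_arrows \<omega> R)\<^sup>*"
    using assms by (intro spine_ascent_open) (auto simp: wet_path_def)
  moreover have "(spine k, spine k @ s) \<in> (open_arrows \<omega> R)\<^sup>*"
    using assms is_vertex_spine[OF assms(1)] by (intro descent_open) (auto simp: wet_path_def)
  ultimately show ?thesis by (simp add: wet_cluster_def)
qed

lemma wet_path_snoc:
  assumes ks: "(k, s) \<in> spine_decomp r" and wet: "wet_path \<omega> r R k s"
    and vertex: "is_vertex \<omega> R (spine k @ s @ [i])" and down: "fst (snd (\<omega> (spine k @ s @ [i])))"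
  shows "\<exists>k' s'. (k', s') \<in> spine_decomp r \<and> spine k @ s @ [i] = spine k' @ s' \<and> wet_path \<omega> r R k' s'"
proof (cases "s = [] \<and> k < r \<and> i = 0")
  case True
  then have "spine k @ s @ [i] = spine (Suc k) @ []" by (simp add: replicate_append_same)
  moreover have "wet_path \<omega> r R (Suc k) []"
    using True vertex wet by (auto simp: wet_path_def is_vertex_snoc)
  moreover have "(Suc k, []) \<in> spine_decomp r" using True by (simp add: spine_decomp_def)
  ultimately show ?thesis by blast
next
  case False
  have i: "i < fst (\<omega> (spine k @ s))"
    using vertex is_vertex_snoc[of \<omega> R "spine k @ s" i] by simp
  have "(k, s @ [i]) \<in> spine_decomp r"
    using False ks by (auto simp: spine_decomp_def hd_append)
  moreover have "wet_path \<omega> r R k (s @ [i])"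
    unfolding wet_path_def
  proof (intro conjI allI impI)
    show "k + length (s @ [i]) \<le> R" using vertex by (simp add: is_vertex_def)
    show "snd (snd (\<omega> (spine j)))" if "k < j \<and> j \<le> r" for j
      using wet that by (simp add: wet_path_def)
    show "(s @ [i]) ! j < fst (\<omega> (spine k @ take j (s @ [i])))" if "j < length (s @ [i])" for j
      using wet i that by (cases "j < length s") (auto simp: wet_path_def nth_append)
    show "fst (snd (\<omega> (spine k @ take j (s @ [i]))))" if "0 < j \<and> j \<le> length (s @ [i])" for j
      using wet down that by (cases "j \<le> length s") (auto simp: wet_path_def)
  qed
  ultimately show ?thesis by blast
qed

lemma wet_path_butlast:
  assumes ks: "(k, s) \<in> spine_decomp r" and wet: "wet_path \<omega> r R k s"
    and y: "spine k @ s = w @ [i]" and up: "snd (snd (\<omega> (w @ [i])))"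
  shows "\<exists>k' s'. (k', s') \<in> spine_decomp r \<and> w = spine k' @ s' \<and> wet_path \<omega> r R k' s'"
proof (cases "s = []")
  case True
  then obtain k' where k: "k = Suc k'" using y by (cases k) auto
  from y have "spine k' @ [0] = w @ [i]" unfolding True k spine_Suc append_Nil2 .
  then have "spine k' = w \<and> 0 = i" unfolding append1_eq_conv .
  then have w: "w = spine k'" and "i = 0" by simp_all
  then have up_k: "snd (snd (\<omega> (spine k)))" using up k spine_Suc by simp
  have "wet_path \<omega> r R k' []"
    unfolding wet_path_def
  proof (intro conjI allI impI)
    show "k' + length [] \<le> R" using wet k by (simp add: wet_path_def)
    show "snd (snd (\<omega> (spine j)))" if "k' < j \<and> j \<le> r" for j
      using wet up_k k that by (cases "j = k") (auto simp: wet_path_def)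
  qed auto
  moreover have "(k', []) \<in> spine_decomp r" using ks k by (simp add: spine_decomp_def)
  ultimately show ?thesis using w by blast
next
  case False
  then have w: "w = spine k @ butlast s"
    using y by (metis butlast_append butlast_snoc)
  have "(k, butlast s) \<in> spine_decomp r" using ks False
    by (cases s rule: rev_cases) (auto simp: spine_decomp_def hd_append split: if_splits)
  moreover have "wet_path \<omega> r R k (butlast s)"
    unfolding wet_path_def
  proof (intro conjI allI impI)
    show "k + length (butlast s) \<le> R" using wet by (auto simp: wet_path_def)
    show "snd (snd (\<omega> (spine j)))" if "k < j \<and> j \<le> r" for j
      using wet that by (simp add: wet_path_def)
    show "butlast s ! j < fst (\<omega> (spine k @ take j (butlast s)))" if "j < length (butlast s)" for j
      using wet that by (simp add: wet_path_def nth_butlast take_butlast)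
    show "fst (snd (\<omega> (spine k @ take j (butlast s))))" if "0 < j \<and> j \<le> length (butlast s)" for j
    proof -
      have "0 < length s" using False by simp
      with that have "j < length s" by (simp only: length_butlast) linarith
      then show ?thesis using wet that by (simp add: wet_path_def take_butlast)
    qed
  qed
  ultimately show ?thesis using w by blast
qed

lemma wet_imp_wet_path:
  assumes "r \<le> R" "(spine r, y) \<in> (open_arrows \<omega> R)\<^sup>*"
  shows "\<exists>k s. (k, s) \<in> spine_decomp r \<and> y = spine k @ s \<and> wet_path \<omega> r R k s"
  using assms(2)
proof (induction rule: rtrancl_induct)
  case base
  have "wet_path \<omega> r R r []" using assms(1) by (auto simp: wet_path_def)
  then show ?case by (intro exI[of _ r] exI[of _ "[]"]) (simp add: spine_decomp_def)
next
  case (step y w)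
  then obtain k s where ks: "(k, s) \<in> spine_decomp r" and y: "y = spine k @ s"
    and wet: "wet_path \<omega> r R k s"
    by blast
  from step.hyps(2) show ?case
  proof (cases rule: open_arrowsE)
    case (down i)
    then have w: "w = spine k @ s @ [i]" using y by simp
    show ?thesis unfolding w using down w by (intro wet_path_snoc[OF ks wet]) simp_all
  next
    case (up i)
    then show ?thesis using y by (intro wet_path_butlast[OF ks wet]) simp_all
  qed
qed

lemma mem_wet_cluster_iff_wet_path:
  assumes "\<forall>v. 0 < fst (\<omega> v)" "r \<le> R" "(k, s) \<in> spine_decomp r"
  shows "spine k @ s \<in> wet_cluster \<omega> R (spine r) \<longleftrightarrow> wet_path \<omega> r R k s"
proof
  assume "spine k @ s \<in> wet_cluster \<omega> R (spine r)"
  then have "(spine r, spine k @ s) \<in> (open_arrows \<omega> R)\<^sup>*" by (simp add: wet_cluster_def)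
  then obtain k' s' where "(k', s') \<in> spine_decomp r" "spine k @ s = spine k' @ s'" "wet_path \<omega> r R k' s'"
    using wet_imp_wet_path[OF assms(2)] by blast
  with spine_decomp_unique[OF assms(3)] show "wet_path \<omega> r R k s" by blast
next
  assume "wet_path \<omega> r R k s"
  then show "spine k @ s \<in> wet_cluster \<omega> R (spine r)"
    using assms(3) by (intro wet_path_imp_wet[OF assms(1,2)]) (simp_all add: spine_decomp_def)
qed

section \<open>Probability that a given vertex is wet\<close>

definition site_pmf :: "nat pmf \<Rightarrow> real \<Rightarrow> real \<Rightarrow> (nat \<times> bool \<times> bool) pmf" where
  "site_pmf P p q = pair_pmf P (pair_pmf (bernoulli_pmf p) (bernoulli_pmf q))"

lemma GW_perc_eq_PiM: "GW_perc P p q = PiM UNIV (\<lambda>_::nat list. measure_pmf (site_pmf P p q))"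
  by (simp add: GW_perc_def site_pmf_def)

lemma product_prob_space_site_pmf:
  "product_prob_space (\<lambda>_::nat list. measure_pmf (site_pmf P p q))"
  by (rule product_prob_spaceI) (rule prob_space_measure_pmf)

lemma emeasure_pair_pmf_triple:
  fixes M :: "'a::countable pmf" and N :: "'b::countable pmf" and L :: "'c::countable pmf"
  shows
  "emeasure (measure_pmf (pair_pmf M (pair_pmf N L))) {t. A (fst t) \<and> B (fst (snd t)) \<and> C (snd (snd t))}
   = emeasure (measure_pmf M) {x. A x} * emeasure (measure_pmf N) {y. B y} * emeasure (measure_pmf L) {z. C z}"
proof -
  have e: "{t. A (fst t) \<and> B (fst (snd t)) \<and> C (snd (snd t))} = {x. A x} \<times> ({y. B y} \<times> {z. C z})"
    by auto
  show ?thesis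
    unfolding e measure_pmf.emeasure_eq_measure
    by (simp add: measure_pmf_prob_product ennreal_mult'' mult.assoc)
qed

lemma emeasure_bernoulli_True:
  assumes "0 \<le> p" "p \<le> 1"
  shows "emeasure (measure_pmf (bernoulli_pmf p)) {b. b} = ennreal p"
proof -
  have "{b. b} = {True}" by auto
  with assms show ?thesis by (simp add: emeasure_pmf_single)
qed

lemma emeasure_site_up:
  assumes "0 \<le> q" "q \<le> 1"
  shows "emeasure (measure_pmf (site_pmf P p q)) {t. snd (snd t)} = ennreal q"
  using emeasure_pair_pmf_triple[of P "bernoulli_pmf p" "bernoulli_pmf q" "\<lambda>_. True" "\<lambda>_. True" "\<lambda>b. b"]
    assms by (simp add: site_pmf_def emeasure_bernoulli_True)

lemma emeasure_site_down:
  assumes "0 \<le> p" "p \<le> 1"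
  shows "emeasure (measure_pmf (site_pmf P p q)) {t. (c1 \<longrightarrow> fst (snd t)) \<and> (c2 \<longrightarrow> i < fst t)}
    = (if c2 then tail_prob P i else 1) * (if c1 then ennreal p else 1)"
  using emeasure_pair_pmf_triple[of P "bernoulli_pmf p" "bernoulli_pmf q" "\<lambda>n. c2 \<longrightarrow> i < n" "\<lambda>b. c1 \<longrightarrow> b" "\<lambda>_. True"]
    assms
  by (cases c1; cases c2) (simp_all add: site_pmf_def emeasure_bernoulli_True tail_prob_def conj_commute)

lemma AE_offspring_pos:
  assumes "pmf P 0 = 0"
  shows "AE \<omega> in GW_perc P p q. \<forall>v. 0 < fst (\<omega> v)"
proof -
  interpret product_prob_space "\<lambda>_::nat list. measure_pmf (site_pmf P p q)" UNIV
    by (rule product_prob_space_site_pmf)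
  let ?M = "PiM UNIV (\<lambda>_::nat list. measure_pmf (site_pmf P p q))"
  have "AE \<omega> in ?M. 0 < fst (\<omega> v)" for v
  proof (rule AE_I')
    let ?N = "{\<omega> \<in> space ?M. \<omega> v \<in> {t. fst t = 0}}"
    have "emeasure ?M ?N = emeasure (measure_pmf (site_pmf P p q)) {t. fst t = 0}"
      by (rule emeasure_PiM_Collect_single) auto
    also have "\<dots> = 0"
      using emeasure_pair_pmf_triple[of P "bernoulli_pmf p" "bernoulli_pmf q" "\<lambda>n. n = 0" "\<lambda>_. True" "\<lambda>_. True"]
        assms by (simp add: site_pmf_def emeasure_pmf_single)
    finally show "?N \<in> null_sets ?M" by (intro null_setsI) auto
    show "{\<omega> \<in> space ?M. \<not> 0 < fst (\<omega> v)} \<subseteq> ?N" by auto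
  qed
  then show ?thesis unfolding GW_perc_eq_PiM by (simp add: AE_all_countable)
qed

definition up_sites :: "nat \<Rightarrow> nat \<Rightarrow> nat list set" where
  "up_sites r k = spine ` {k<..r}"

definition down_sites :: "nat \<Rightarrow> nat list \<Rightarrow> nat list set" where
  "down_sites k s = (\<lambda>j. spine k @ take j s) ` {..length s}"

text \<open>The constraint that \<open>wet_path \<omega> r R k s\<close> puts on the coordinate \<open>\<omega> v\<close>: open up-arrow
  on the spine, and on the descending path an open down-arrow (except at \<open>spine k\<close>) and enough
  offspring to continue along \<open>s\<close> (except at the end).\<close>
definition site_constraint :: "nat \<Rightarrow> nat \<Rightarrow> nat list \<Rightarrow> nat list \<Rightarrow> (nat \<times> bool \<times> bool) set" where
  "site_constraint r k s v = (if v \<in> up_sites r k then {t. snd (snd t)}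
     else {t. (k < length v \<longrightarrow> fst (snd t)) \<and> (length v < k + length s \<longrightarrow> s ! (length v - k) < fst t)})"

lemma up_sites_down_sites_disjoint:
  assumes "(k, s) \<in> spine_decomp r"
  shows "up_sites r k \<inter> down_sites k s = {}"
proof (rule ccontr)
  assume "up_sites r k \<inter> down_sites k s \<noteq> {}"
  then obtain j i where j: "k < j" "j \<le> r" and i: "i \<le> length s" and e: "spine j = spine k @ take i s"
    unfolding up_sites_def down_sites_def by auto
  then have "j = k + i" by (metis length_append length_replicate length_take min.absorb2)
  with e have "take i s = spine i" by (simp add: replicate_add)
  moreover have "0 < i" using j \<open>j = k + i\<close> by simp
  ultimately have "s \<noteq> [] \<and> hd s = 0" using i
    by (metis hd_replicate hd_take neq0_conv replicate_empty take_eq_Nil)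
  with assms j show False by (auto simp: spine_decomp_def)
qed

lemma site_constraint_down_sites:
  assumes "(k, s) \<in> spine_decomp r" "j \<le> length s"
  shows "site_constraint r k s (spine k @ take j s)
    = {t. (0 < j \<longrightarrow> fst (snd t)) \<and> (j < length s \<longrightarrow> s ! j < fst t)}"
proof -
  have "spine k @ take j s \<in> down_sites k s" using assms(2) by (auto simp: down_sites_def)
  then have "spine k @ take j s \<notin> up_sites r k" using up_sites_down_sites_disjoint[OF assms(1)] by auto
  with assms(2) show ?thesis by (simp add: site_constraint_def min_def)
qed

lemma wet_path_iff_site_constraints:
  assumes "(k, s) \<in> spine_decomp r"
  shows "wet_path \<omega> r R k s \<longleftrightarrow>
    k + length s \<le> R \<and> (\<forall>v \<in> up_sites r k \<union> down_sites k s. \<omega> v \<in> site_constraint r k s v)"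
proof -
  have "(\<forall>v \<in> up_sites r k. \<omega> v \<in> site_constraint r k s v)
      \<longleftrightarrow> (\<forall>j. k < j \<and> j \<le> r \<longrightarrow> snd (snd (\<omega> (spine j))))"
    by (auto simp: up_sites_def site_constraint_def)
  moreover have "(\<forall>v \<in> down_sites k s. \<omega> v \<in> site_constraint r k s v)
      \<longleftrightarrow> (\<forall>j<length s. s ! j < fst (\<omega> (spine k @ take j s)))
        \<and> (\<forall>j. 0 < j \<and> j \<le> length s \<longrightarrow> fst (snd (\<omega> (spine k @ take j s))))"
    by (auto simp: down_sites_def site_constraint_down_sites[OF assms])
  ultimately show ?thesis by (auto simp: wet_path_def)
qed

lemma prod_atMost_shifted_factors:
  fixes c :: "'a :: comm_monoid_mult" and n :: nat
  shows "(\<Prod>j\<le>n. (if j < n then f j else 1) * (if 0 < j then c else 1)) = (\<Prod>j<n. c * f j)"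
proof -
  have "(\<Prod>j\<le>m. if 0 < j then c else 1) = c ^ m" for m
    by (induction m) (auto simp: mult.commute)
  moreover have "(\<Prod>j\<le>n. if j < n then f j else 1) = (\<Prod>j<n. f j)"
  proof -
    have "{..n} = insert n {..<n}" by auto
    moreover have "(\<Prod>j<n. if j < n then f j else 1) = (\<Prod>j<n. f j)"
      by (rule prod.cong) auto
    ultimately show ?thesis by simp
  qed
  ultimately show ?thesis by (simp add: prod.distrib prod_constant mult.commute)
qed

definition wet_path_prob :: "nat pmf \<Rightarrow> real \<Rightarrow> real \<Rightarrow> nat \<Rightarrow> nat \<Rightarrow> nat \<Rightarrow> nat list \<Rightarrow> ennreal" where
  "wet_path_prob P p q r R k s = (if k + length s \<le> R
     then ennreal q ^ (r - k) * (\<Prod>j<length s. ennreal p * tail_prob P (s ! j)) else 0)"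

lemma sets_wet_path:
  assumes "(k, s) \<in> spine_decomp r"
  shows "{\<omega> \<in> space (GW_perc P p q). wet_path \<omega> r R k s} \<in> sets (GW_perc P p q)"
  unfolding wet_path_iff_site_constraints[OF assms] GW_perc_eq_PiM
  by (intro sets.sets_Collect_conj sets.sets_Collect_finite_All)
    (auto simp: up_sites_def down_sites_def)

lemma emeasure_wet_path:
  assumes "0 \<le> p" "p \<le> 1" "0 \<le> q" "q \<le> 1" and ks: "(k, s) \<in> spine_decomp r"
  shows "emeasure (GW_perc P p q) {\<omega> \<in> space (GW_perc P p q). wet_path \<omega> r R k s}
    = wet_path_prob P p q r R k s"
proof (cases "k + length s \<le> R")
  case False
  then show ?thesis by (simp add: wet_path_def wet_path_prob_def)
next
  case True
  interpret product_prob_space "\<lambda>_::nat list. measure_pmf (site_pmf P p q)" UNIV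
    by (rule product_prob_space_site_pmf)
  let ?\<mu> = "\<lambda>v. emeasure (measure_pmf (site_pmf P p q)) (site_constraint r k s v)"
  have "emeasure (GW_perc P p q) {\<omega> \<in> space (GW_perc P p q). wet_path \<omega> r R k s}
      = (\<Prod>v \<in> up_sites r k \<union> down_sites k s. ?\<mu> v)"
    unfolding wet_path_iff_site_constraints[OF ks] GW_perc_eq_PiM
    using True by (simp, intro emeasure_PiM_Collect) (auto simp: up_sites_def down_sites_def)
  also have "\<dots> = (\<Prod>v \<in> up_sites r k. ?\<mu> v) * (\<Prod>v \<in> down_sites k s. ?\<mu> v)"
    using up_sites_down_sites_disjoint[OF ks]
    by (intro prod.union_disjoint) (auto simp: up_sites_def down_sites_def)
  also have "(\<Prod>v \<in> up_sites r k. ?\<mu> v) = ennreal q ^ (r - k)"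
  proof -
    have "inj_on spine {k<..r}" by (auto simp: inj_on_def)
    then show ?thesis
      using emeasure_site_up[OF assms(3,4)]
      by (simp add: up_sites_def site_constraint_def card_image)
  qed
  also have "(\<Prod>v \<in> down_sites k s. ?\<mu> v) = (\<Prod>j \<le> length s. ?\<mu> (spine k @ take j s))"
  proof -
    have "inj_on (\<lambda>j. spine k @ take j s) {..length s}"
      by (rule inj_onI) (metis append_eq_append_conv atMost_iff length_take min.absorb2)
    then show ?thesis by (simp add: down_sites_def prod.reindex)
  qed
  also have "\<dots> = (\<Prod>j \<le> length s. (if j < length s then tail_prob P (s ! j) else 1)
      * (if 0 < j then ennreal p else 1))"
    by (intro prod.cong refl) (simp add: site_constraint_down_sites[OF ks] emeasure_site_down[OF assms(1,2)])
  also have "\<dots> = (\<Prod>j<length s. ennreal p * tail_prob P (s ! j))"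
    by (rule prod_atMost_shifted_factors)
  finally show ?thesis using True by (simp add: wet_path_prob_def)
qed

section \<open>The expected size of the cluster\<close>

lemma card_wet_cluster_eq_nn_integral:
  assumes "\<forall>v. 0 < fst (\<omega> v)" "r \<le> R"
  shows "ennreal (real (card (wet_cluster \<omega> R (spine r))))
    = (\<integral>\<^sup>+ (k, s). of_bool (wet_path \<omega> r R k s) \<partial>count_space (spine_decomp r))"
proof -
  let ?C = "wet_cluster \<omega> R (spine r)"
  have "ennreal (real (card ?C)) = (\<integral>\<^sup>+ y. indicator ?C y \<partial>count_space UNIV)"
    using finite_wet_cluster[of \<omega> R "spine r"] by (simp add: ennreal_of_nat_eq_real_of_nat)
  also have "\<dots> = (\<integral>\<^sup>+ (k, s). indicator ?C (spine k @ s) \<partial>count_space (spine_decomp r))"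
    by (subst nn_integral_bij_count_space[OF bij_betw_spine_decomp, symmetric])
      (simp add: case_prod_unfold)
  also have "\<dots> = (\<integral>\<^sup>+ (k, s). of_bool (wet_path \<omega> r R k s) \<partial>count_space (spine_decomp r))"
    using mem_wet_cluster_iff_wet_path[OF assms]
    by (intro nn_integral_cong) (auto split: split_indicator)
  finally show ?thesis .
qed

lemma nn_integral_card_wet_cluster:
  assumes "pmf P 0 = 0" "0 \<le> p" "p \<le> 1" "0 \<le> q" "q \<le> 1" "r \<le> R"
  shows "(\<integral>\<^sup>+ \<omega>. ennreal (real (card (wet_cluster \<omega> R (spine r)))) \<partial>GW_perc P p q)
    = (\<integral>\<^sup>+ (k, s). wet_path_prob P p q r R k s \<partial>count_space (spine_decomp r))"
proof -
  let ?M = "GW_perc P p q"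
  let ?E = "\<lambda>(k, s). {\<omega> \<in> space ?M. wet_path \<omega> r R k s}"
  have space: "space ?M = UNIV"
    by (simp add: GW_perc_def space_PiM)
  have "(\<integral>\<^sup>+ \<omega>. ennreal (real (card (wet_cluster \<omega> R (spine r)))) \<partial>?M)
      = (\<integral>\<^sup>+ \<omega>. \<integral>\<^sup>+ ks. indicator (?E ks) \<omega> \<partial>count_space (spine_decomp r) \<partial>?M)"
  proof (rule nn_integral_cong_AE)
    show "AE \<omega> in ?M. ennreal (real (card (wet_cluster \<omega> R (spine r))))
        = (\<integral>\<^sup>+ ks. indicator (?E ks) \<omega> \<partial>count_space (spine_decomp r))"
      using AE_offspring_pos[OF assms(1)]
      by eventually_elim
        (simp add: card_wet_cluster_eq_nn_integral[OF _ assms(6)] space case_prod_unfold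
          indicator_def)
  qed
  also have "\<dots> = (\<integral>\<^sup>+ ks. \<integral>\<^sup>+ \<omega>. indicator (?E ks) \<omega> \<partial>?M \<partial>count_space (spine_decomp r))"
  proof (rule nn_integral_count_space_nn_integral)
    show "countable (spine_decomp r)" by (rule countableI_type)
  qed (auto intro!: borel_measurable_indicator sets_wet_path)
  also have "\<dots> = (\<integral>\<^sup>+ (k, s). wet_path_prob P p q r R k s \<partial>count_space (spine_decomp r))"
    using assms(2-5) by (intro nn_integral_cong) (auto simp: sets_wet_path emeasure_wet_path)
  finally show ?thesis .
qed

lemma nn_integral_wet_path_prob_source:
  assumes "integrable (measure_pmf P) real" "0 \<le> p" "r \<le> R"
  shows "(\<integral>\<^sup>+ s. wet_path_prob P p q r R r s * indicator (spine_decomp r) (r, s) \<partial>count_space UNIV)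
    = ennreal (\<Sum>m\<le>R - r. (offspring_mean P * p) ^ m)"
proof -
  have "(\<integral>\<^sup>+ s. wet_path_prob P p q r R r s * indicator (spine_decomp r) (r, s) \<partial>count_space UNIV)
      = (\<integral>\<^sup>+ s. (if length s \<le> R - r then \<Prod>j<length s. ennreal p * tail_prob P (s ! j) else 0)
          \<partial>count_space UNIV)"
    using assms(3) by (intro nn_integral_cong) (auto simp: wet_path_prob_def spine_decomp_def)
  then show ?thesis using nn_integral_bounded_lists_tail_prob[OF assms(1,2)] by simp
qed

text \<open>Off the spine, the first step must avoid the child \<open>0\<close>, which lies on the spine.\<close>
lemma nn_integral_wet_path_prob_branch:
  assumes "pmf P 0 = 0" "integrable (measure_pmf P) real" "0 \<le> p" "0 \<le> q" "k < r" "r \<le> R"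
  defines "\<mu> \<equiv> offspring_mean P"
  shows "(\<integral>\<^sup>+ s. wet_path_prob P p q r R k s * indicator (spine_decomp r) (k, s) \<partial>count_space UNIV)
    = ennreal (q ^ (r - k) * (1 + p * (\<mu> - 1) * (\<Sum>m\<le>R - k - 1. (\<mu> * p) ^ m)))"
proof -
  let ?G = "\<lambda>s. wet_path_prob P p q r R k s * indicator (spine_decomp r) (k, s)"
  let ?S = "\<Sum>m\<le>R - k - 1. (\<mu> * p) ^ m"
  have \<mu>1: "1 \<le> \<mu>" unfolding \<mu>_def by (rule offspring_mean_ge_1[OF assms(1,2)])
  have S: "0 \<le> ?S" using \<mu>1 assms(3) by (intro sum_nonneg) simp
  have "(\<integral>\<^sup>+ s. ?G s \<partial>count_space UNIV)
      = ?G [] + (\<integral>\<^sup>+ i. \<integral>\<^sup>+ s. ?G (i # s) \<partial>count_space UNIV \<partial>count_space UNIV)"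
    by (rule nn_integral_list_Nil_Cons)
  also have "?G [] = ennreal (q ^ (r - k))"
    using assms by (simp add: wet_path_prob_def spine_decomp_def ennreal_power)
  also have "(\<integral>\<^sup>+ i. \<integral>\<^sup>+ s. ?G (i # s) \<partial>count_space UNIV \<partial>count_space UNIV)
     = (\<integral>\<^sup>+ i. \<integral>\<^sup>+ s. (ennreal (q ^ (r - k)) * ennreal p * (tail_prob P i * indicator {i. i \<noteq> 0} i))
          * (if length s \<le> R - k - 1 then \<Prod>j<length s. ennreal p * tail_prob P (s ! j) else 0)
          \<partial>count_space UNIV \<partial>count_space UNIV)"
    using assms(4-6)
    by (intro nn_integral_cong)
      (auto simp: wet_path_prob_def spine_decomp_def prod.lessThan_Suc_shift ennreal_power mult_ac
        split: split_indicator simp del: prod.lessThan_Suc)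
  also have "\<dots> = (\<integral>\<^sup>+ i. (ennreal (q ^ (r - k)) * ennreal p * ennreal ?S)
      * (tail_prob P i * indicator {i. i \<noteq> 0} i) \<partial>count_space UNIV)"
    by (intro nn_integral_cong)
      (simp add: nn_integral_cmult nn_integral_bounded_lists_tail_prob[OF assms(2,3)] \<mu>_def mult_ac)
  also have "\<dots> = ennreal (q ^ (r - k)) * ennreal p * ennreal ?S * ennreal (\<mu> - 1)"
    by (subst nn_integral_cmult) (simp, simp only: nn_integral_tail_prob_nonzero[OF assms(1,2)] \<mu>_def)
  also have "ennreal (q ^ (r - k)) + \<dots> = ennreal (q ^ (r - k) * (1 + p * (\<mu> - 1) * ?S))"
  proof -
    have nonneg: "0 \<le> q ^ (r - k)" "0 \<le> \<mu> - 1" using assms(4) \<mu>1 by simp_all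
    have "q ^ (r - k) * (1 + p * (\<mu> - 1) * ?S) = q ^ (r - k) + q ^ (r - k) * p * ?S * (\<mu> - 1)"
      by (simp add: algebra_simps)
    moreover have "ennreal (q ^ (r - k) + q ^ (r - k) * p * ?S * (\<mu> - 1))
        = ennreal (q ^ (r - k)) + ennreal (q ^ (r - k) * p * ?S * (\<mu> - 1))"
      using nonneg assms(3) S by (intro ennreal_plus) auto
    moreover have "ennreal (q ^ (r - k) * p * ?S * (\<mu> - 1))
        = ennreal (q ^ (r - k)) * ennreal p * ennreal ?S * ennreal (\<mu> - 1)"
      using nonneg assms(3) S by (simp add: ennreal_mult)
    ultimately show ?thesis by simp
  qed
  finally show ?thesis .
qed

lemma nn_integral_wet_path_prob:
  assumes "pmf P 0 = 0" "integrable (measure_pmf P) real" "0 \<le> p" "0 \<le> q" "r \<le> R"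
  defines "\<mu> \<equiv> offspring_mean P"
  shows "(\<integral>\<^sup>+ (k, s). wet_path_prob P p q r R k s \<partial>count_space (spine_decomp r))
    = ennreal ((\<Sum>m\<le>R - r. (\<mu> * p) ^ m)
       + (\<Sum>k<r. q ^ (r - k) * (1 + p * (\<mu> - 1) * (\<Sum>m\<le>R - k - 1. (\<mu> * p) ^ m))))"
proof -
  let ?F = "\<lambda>k. \<integral>\<^sup>+ s. wet_path_prob P p q r R k s * indicator (spine_decomp r) (k, s) \<partial>count_space UNIV"
  have \<mu>1: "1 \<le> \<mu>" unfolding \<mu>_def by (rule offspring_mean_ge_1[OF assms(1,2)])
  have "(\<integral>\<^sup>+ (k, s). wet_path_prob P p q r R k s \<partial>count_space (spine_decomp r))
      = (\<integral>\<^sup>+ k. ?F k \<partial>count_space UNIV)"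
    by (simp add: nn_integral_count_space_indicator case_prod_unfold
        flip: nn_integral_fst_count_space)
  also have "\<dots> = (\<Sum>k\<le>r. ?F k)"
    by (rule nn_integral_count_space') (auto simp: spine_decomp_def)
  also have "\<dots> = ?F r + (\<Sum>k<r. ?F k)"
    by (simp add: lessThan_Suc_atMost[symmetric] add.commute)
  also have "\<dots> = ennreal (\<Sum>m\<le>R - r. (\<mu> * p) ^ m)
      + (\<Sum>k<r. ennreal (q ^ (r - k) * (1 + p * (\<mu> - 1) * (\<Sum>m\<le>R - k - 1. (\<mu> * p) ^ m))))"
    using assms by (simp add: nn_integral_wet_path_prob_source nn_integral_wet_path_prob_branch)
  also have "\<dots> = ennreal ((\<Sum>m\<le>R - r. (\<mu> * p) ^ m)
       + (\<Sum>k<r. q ^ (r - k) * (1 + p * (\<mu> - 1) * (\<Sum>m\<le>R - k - 1. (\<mu> * p) ^ m))))"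
    using assms(3,4) \<mu>1
    by (simp add: sum_nonneg ennreal_plus sum_ennreal)
  finally show ?thesis .
qed

section \<open>Evaluation of the geometric sums\<close>

lemma expected_size_closed_form:
  fixes \<mu> p q :: real and n r :: nat
  assumes x: "\<mu> * p \<noteq> 1" and xq: "\<mu> * p * q \<noteq> 1" and q: "q \<noteq> 1"
  shows "(1 - (\<mu> * p) ^ (n + 1)) / (1 - \<mu> * p)
      + (\<Sum>k<r. q ^ (r - k) * (1 + p * (\<mu> - 1) * ((1 - (\<mu> * p) ^ (n + r - k)) / (1 - \<mu> * p))))
    = 1 / (1 - \<mu> * p) * (1 + q * ((1 - q ^ r) / (1 - q)) * (1 - p)
        - (\<mu> * p) ^ (n + 1) * ((1 - p * q * (1 + (\<mu> - 1) * (\<mu> * p * q) ^ r)) / (1 - \<mu> * p * q)))"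
proof (induction r)
  case 0
  have "1 - \<mu> * p * q \<noteq> 0" "1 - \<mu> * p \<noteq> 0" using x xq by auto
  then show ?case by (simp add: field_simps)
next
  case (Suc r)
  have d: "1 - \<mu> * p * q \<noteq> 0" "1 - \<mu> * p \<noteq> 0" "1 - q \<noteq> 0" using x xq q by auto
  let ?x = "\<mu> * p"
  text \<open>The new summand \<open>k = 0\<close>, written in terms of \<open>Q = q\<^sup>r\<close>, \<open>X = (\<mu> p)\<^sup>n\<^sup>+\<^sup>1\<close> and
    \<open>Z = (\<mu> p q)\<^sup>r\<close>, is exactly the increment of the right-hand side from \<open>r\<close> to \<open>r + 1\<close>.\<close>
  have increment: "1 / (1 - ?x) * (1 + q * ((1 - Q) / (1 - q)) * (1 - p)
        - X * ((1 - p * q * (1 + (\<mu> - 1) * Z)) / (1 - \<mu> * p * q)))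
      + (q * Q + p * (\<mu> - 1) * (q * Q - q * X * Z) / (1 - ?x))
    = 1 / (1 - ?x) * (1 + q * ((1 - q * Q) / (1 - q)) * (1 - p)
        - X * ((1 - p * q * (1 + (\<mu> - 1) * (\<mu> * p * q * Z))) / (1 - \<mu> * p * q)))" for Q X Z
    using d by (simp add: divide_simps) algebra
  have shift: "(\<Sum>k<Suc r. q ^ (Suc r - k) * (1 + p * (\<mu> - 1) * ((1 - ?x ^ (n + Suc r - k)) / (1 - ?x))))
     = q ^ Suc r * (1 + p * (\<mu> - 1) * ((1 - ?x ^ (n + r + 1)) / (1 - ?x)))
       + (\<Sum>k<r. q ^ (r - k) * (1 + p * (\<mu> - 1) * ((1 - ?x ^ (n + r - k)) / (1 - ?x))))"
    by (simp add: sum.lessThan_Suc_shift del: sum.lessThan_Suc)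
  have power: "?x ^ (n + r + 1) * q ^ r = ?x ^ (n + 1) * (\<mu> * p * q) ^ r"
    by (simp add: power_add power_mult_distrib mult_ac)
  have "q ^ Suc r * (1 + p * (\<mu> - 1) * ((1 - ?x ^ (n + r + 1)) / (1 - ?x)))
      = q * q ^ r + p * (\<mu> - 1) * (q * q ^ r - q * (?x ^ (n + r + 1) * q ^ r)) / (1 - ?x)"
    using d by (simp add: field_simps)
  then have first: "q ^ Suc r * (1 + p * (\<mu> - 1) * ((1 - ?x ^ (n + r + 1)) / (1 - ?x)))
      = q * q ^ r + p * (\<mu> - 1) * (q * q ^ r - q * ?x ^ (n + 1) * (\<mu> * p * q) ^ r) / (1 - ?x)"
    unfolding power by (simp add: mult_ac)
  show ?case
    unfolding shift first
    using Suc.IH increment[of "q ^ r" "?x ^ (n + 1)" "(\<mu> * p * q) ^ r"]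
    by (simp only: power_Suc)
qed

lemma expected_size_sum_eq:
  fixes \<mu> p q :: real and r R :: nat
  assumes "\<mu> * p \<noteq> 1" "\<mu> * p * q \<noteq> 1" "q \<noteq> 1" "r \<le> R"
  shows "(\<Sum>m\<le>R - r. (\<mu> * p) ^ m)
      + (\<Sum>k<r. q ^ (r - k) * (1 + p * (\<mu> - 1) * (\<Sum>m\<le>R - k - 1. (\<mu> * p) ^ m)))
    = 1 / (1 - \<mu> * p) * (1 + q * ((1 - q ^ r) / (1 - q)) * (1 - p)
        - (\<mu> * p) ^ (R - r + 1) * ((1 - p * q * (1 + (\<mu> - 1) * (\<mu> * p * q) ^ r)) / (1 - \<mu> * p * q)))"
proof -
  have geom: "(\<Sum>m\<le>n. (\<mu> * p) ^ m) = (1 - (\<mu> * p) ^ (n + 1)) / (1 - \<mu> * p)" for n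
    using assms(1) by (simp add: sum_gp0)
  have "(\<Sum>k<r. q ^ (r - k) * (1 + p * (\<mu> - 1) * (\<Sum>m\<le>R - k - 1. (\<mu> * p) ^ m)))
      = (\<Sum>k<r. q ^ (r - k) * (1 + p * (\<mu> - 1)
          * ((1 - (\<mu> * p) ^ ((R - r) + r - k)) / (1 - \<mu> * p))))"
    using assms(4) by (intro sum.cong refl) (simp add: geom Suc_diff_Suc)
  with geom[of "R - r"] expected_size_closed_form[OF assms(1-3), of "R - r" r] show ?thesis
    by simp
qed

theorem theorem1:
  fixes P :: "nat pmf" and p q :: real and r R :: nat
  assumes "pmf P 0 = 0"
    and "0 < p" "p < 1" "0 < q" "q < 1"
    and "r \<le> R"
    and "integrable (measure_pmf P) real"
    and "offspring_mean P * p \<noteq> 1"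
    and "offspring_mean P * p * q \<noteq> 1"
  shows "(\<integral>\<^sup>+ \<omega>. ennreal (real (card (wet_cluster \<omega> R (replicate r 0)))) \<partial>GW_perc P p q)
     = ennreal (1 / (1 - offspring_mean P * p) *
         (1 + q * ((1 - q ^ r) / (1 - q)) * (1 - p)
          - (offspring_mean P * p) ^ (R - r + 1) *
            ((1 - p * q * (1 + (offspring_mean P - 1) * (offspring_mean P * p * q) ^ r))
             / (1 - offspring_mean P * p * q))))"
proof -
  let ?\<mu> = "offspring_mean P"
  have "(\<integral>\<^sup>+ \<omega>. ennreal (real (card (wet_cluster \<omega> R (spine r)))) \<partial>GW_perc P p q)
      = (\<integral>\<^sup>+ (k, s). wet_path_prob P p q r R k s \<partial>count_space (spine_decomp r))"
    using assms by (intro nn_integral_card_wet_cluster) auto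
  also have "\<dots> = ennreal ((\<Sum>m\<le>R - r. (?\<mu> * p) ^ m)
       + (\<Sum>k<r. q ^ (r - k) * (1 + p * (?\<mu> - 1) * (\<Sum>m\<le>R - k - 1. (?\<mu> * p) ^ m))))"
    using assms by (intro nn_integral_wet_path_prob) auto
  also have "(\<Sum>m\<le>R - r. (?\<mu> * p) ^ m)
       + (\<Sum>k<r. q ^ (r - k) * (1 + p * (?\<mu> - 1) * (\<Sum>m\<le>R - k - 1. (?\<mu> * p) ^ m)))
     = 1 / (1 - ?\<mu> * p) * (1 + q * ((1 - q ^ r) / (1 - q)) * (1 - p)
        - (?\<mu> * p) ^ (R - r + 1) * ((1 - p * q * (1 + (?\<mu> - 1) * (?\<mu> * p * q) ^ r)) / (1 - ?\<mu> * p * q)))"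
    using assms by (intro expected_size_sum_eq) auto
  finally show ?thesis .
qed

end
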